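(* Let $a>0$, $b>0$, and let $\chi_1,\chi_2\ge0$, $\lambda_1,\lambda_2>0$, $\mu_1,\mu_2>0$ be arbitrary. Then the system $$\begin{cases}\partial_t u=\partial_{xx}u+\partial_x\big(u\,\partial_x(\chi_2 v_2-\chi_1 v_1)\big)+u(a-bu), & x\in\mathbb{R},\\ 0=\partial_{xx}v_1-\lambda_1 v_1+\mu_1 u, & x\in\mathbb{R},\\ 0=\partial_{xx}v_2-\lambda_2 v_2+\mu_2 u, & x\in\mathbb{R}\end{cases}$$ has no traveling wave solution $(u,v_1,v_2)=(U(x-ct),V_1(x-ct),V_2(x-ct))$ with $(U,V_1,V_2)(-\infty)=(\frac ab,\frac{a\mu_1}{b\lambda_1},\frac{a\mu_2}{b\lambda_2})$, $(U,V_1,V_2)(\infty)=(0,0,0)$ and $c<2\sqrt a$.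
   Context: A traveling wave solution here is a nonnegative classical solution of the stated form with the stated limits as the argument tends to $\mp\infty$. *)

theory Defs
  imports "HOL-Analysis.Analysis"
begin

definition C2_real :: "(real \<Rightarrow> real) \<Rightarrow> bool" where
  "C2_real f \<longleftrightarrow> (\<exists>f' f''. (\<forall>x. (f has_real_derivative f' x) (at x)) \<and>
      (\<forall>x. (f' has_real_derivative f'' x) (at x)) \<and> continuous_on UNIV f'')"

definition traveling_wave ::
  "real \<Rightarrow> real \<Rightarrow> real \<Rightarrow> real \<Rightarrow> real \<Rightarrow> real \<Rightarrow> real \<Rightarrow> real \<Rightarrow> real \<Rightarrow>
   (real \<Rightarrow> real) \<Rightarrow> (real \<Rightarrow> real) \<Rightarrow> (real \<Rightarrow> real) \<Rightarrow> bool" where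
  "traveling_wave a b chi1 chi2 lam1 lam2 mu1 mu2 c U V1 V2 \<longleftrightarrow>
     (let u = (\<lambda>t x. U (x - c * t)); v1 = (\<lambda>t x. V1 (x - c * t));
          v2 = (\<lambda>t x. V2 (x - c * t)) in
     (\<forall>z. U z \<ge> 0 \<and> V1 z \<ge> 0 \<and> V2 z \<ge> 0) \<and>
     C2_real U \<and> C2_real V1 \<and> C2_real V2 \<and>
     (\<forall>t x. deriv (\<lambda>s. u s x) t =
          deriv (deriv (u t)) x
          + deriv (\<lambda>y. u t y * deriv (\<lambda>y'. chi2 * v2 t y' - chi1 * v1 t y') y) x
          + u t x * (a - b * u t x)) \<and>
     (\<forall>t x. 0 = deriv (deriv (v1 t)) x - lam1 * v1 t x + mu1 * u t x) \<and>
     (\<forall>t x. 0 = deriv (deriv (v2 t)) x - lam2 * v2 t x + mu2 * u t x) \<and>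
     (U \<longlongrightarrow> a / b) at_bot \<and> (V1 \<longlongrightarrow> a * mu1 / (b * lam1)) at_bot \<and>
     (V2 \<longlongrightarrow> a * mu2 / (b * lam2)) at_bot \<and>
     (U \<longlongrightarrow> 0) at_top \<and> (V1 \<longlongrightarrow> 0) at_top \<and> (V2 \<longlongrightarrow> 0) at_top)"

end

theory Submission
  imports Defs
begin

text \<open>
  In the moving frame the profile satisfies the linear equation \<open>U'' + p U' + q U = 0\<close> with
  \<open>p = c + W'\<close>, \<open>q = a - b U + W''\<close> and \<open>W = chi2 V2 - chi1 V1\<close>. The elliptic equations give
  \<open>W'' \<rightarrow> 0\<close>, hence \<open>W' \<rightarrow> 0\<close>, at \<open>+\<infinity>\<close>, so \<open>p \<rightarrow> c\<close> and \<open>q \<rightarrow> a\<close>. A Gronwall estimate for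
  \<open>U\<^sup>2 + U'\<^sup>2\<close> shows that a nonnegative solution vanishing at a point vanishes to its left, so
  \<open>U > 0\<close> because \<open>U(-\<infinity>) = a/b\<close>. Then \<open>R = U'/U\<close> solves \<open>R' = -(R\<^sup>2 + p R + q)\<close>. Since
  \<open>c\<^sup>2 < 4a\<close>, near \<open>+\<infinity>\<close> the right-hand side is at most \<open>-\<delta>(1 + R\<^sup>2)\<close> whenever \<open>R \<le> 0\<close>; as \<open>U \<rightarrow> 0\<close>,
  \<open>R\<close> becomes negative somewhere, stays negative, and \<open>arctan R\<close> then decreases at rate \<open>\<delta>\<close>
  forever, which is impossible.
\<close>

lemma abs_derivative_le_by_interpolation:
  fixes f f' f'' :: "real \<Rightarrow> real"
  assumes f': "\<And>t. x \<le> t \<Longrightarrow> t \<le> x + 1 \<Longrightarrow> (f has_real_derivative f' t) (at t)"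
    and f'': "\<And>t. x \<le> t \<Longrightarrow> t \<le> x + 1 \<Longrightarrow> (f' has_real_derivative f'' t) (at t)"
    and f_bound: "\<bar>f x\<bar> \<le> A" "\<bar>f (x + 1)\<bar> \<le> A"
    and f''_bound: "\<And>t. x \<le> t \<Longrightarrow> t \<le> x + 1 \<Longrightarrow> \<bar>f'' t\<bar> \<le> B"
  shows "\<bar>f' x\<bar> \<le> 2 * A + B"
proof -
  obtain y where y: "x < y" "y < x + 1" "f (x + 1) - f x = f' y"
    using MVT2[of x "x + 1" f f'] f' by auto
  obtain w where w: "x < w" "w < y" "f' y - f' x = (y - x) * f'' w"
    using MVT2[of x y f' f''] f'' y by auto
  have "\<bar>(y - x) * f'' w\<bar> \<le> 1 * B"
    unfolding abs_mult using y w f''_bound[of w] by (intro mult_mono) auto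
  then show ?thesis
    using y(3) w(3) f_bound by linarith
qed

lemma tendsto_derivative_zero_at_top:
  fixes f f' f'' :: "real \<Rightarrow> real"
  assumes f': "\<And>x. (f has_real_derivative f' x) (at x)"
    and f'': "\<And>x. (f' has_real_derivative f'' x) (at x)"
    and "(f \<longlongrightarrow> 0) at_top" "(f'' \<longlongrightarrow> 0) at_top"
  shows "(f' \<longlongrightarrow> 0) at_top"
proof (rule tendstoI)
  fix e :: real
  assume "e > 0"
  then have "\<forall>\<^sub>F x in at_top. \<bar>f x\<bar> < e / 4 \<and> \<bar>f'' x\<bar> < e / 4"
    using assms(3,4)[THEN tendstoD, of "e / 4"] by (auto simp: eventually_conj_iff)
  then obtain N where N: "\<And>x. N \<le> x \<Longrightarrow> \<bar>f x\<bar> < e / 4 \<and> \<bar>f'' x\<bar> < e / 4"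
    by (auto simp: eventually_at_top_linorder)
  have "\<bar>f' x\<bar> < e" if "N \<le> x" for x
  proof -
    have "\<bar>f' x\<bar> \<le> 2 * (e / 4) + e / 4"
      using that N by (intro abs_derivative_le_by_interpolation[where f = f and f'' = f''])
        (auto intro: f' f'' less_imp_le)
    then show ?thesis
      using \<open>e > 0\<close> by linarith
  qed
  then show "\<forall>\<^sub>F x in at_top. dist (f' x) 0 < e"
    by (auto simp: eventually_at_top_linorder)
qed

lemma linear_ode_energy_rate_bound:
  fixes u u' p q M :: real
  assumes "\<bar>p\<bar> \<le> M" "\<bar>q\<bar> \<le> M"
  shows "0 \<le> 2 * u * u' + 2 * u' * (- p * u' - q * u) + (1 + 3 * M) * (u\<^sup>2 + u'\<^sup>2)"
proof -
  have uu': "\<bar>2 * u * u'\<bar> \<le> u\<^sup>2 + u'\<^sup>2"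
    using sum_squares_bound[of u u'] sum_squares_bound[of "-u" u'] by (simp add: abs_le_iff)
  have "p * u'\<^sup>2 \<le> M * u'\<^sup>2"
    using assms(1) by (intro mult_right_mono) auto
  moreover have "\<bar>q * (2 * u * u')\<bar> \<le> M * (u\<^sup>2 + u'\<^sup>2)"
    unfolding abs_mult[of q] using assms(2) uu' by (intro mult_mono) auto
  moreover have "0 \<le> M * u\<^sup>2"
    using assms(1) by simp
  moreover have "2 * u * u' + 2 * u' * (- p * u' - q * u) + (1 + 3 * M) * (u\<^sup>2 + u'\<^sup>2)
      = 2 * u * u' - 2 * (p * u'\<^sup>2) - q * (2 * u * u') + (u\<^sup>2 + u'\<^sup>2)
        + M * (u\<^sup>2 + u'\<^sup>2) + 2 * (M * u'\<^sup>2) + 2 * (M * u\<^sup>2)"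
    by algebra
  ultimately show ?thesis
    using uu' by (simp only: abs_le_iff) linarith
qed

lemma nonneg_linear_ode_zero_propagates_left:
  fixes U U' U'' p q :: "real \<Rightarrow> real"
  assumes U': "\<And>x. (U has_real_derivative U' x) (at x)"
    and U'': "\<And>x. (U' has_real_derivative U'' x) (at x)"
    and ode: "\<And>x. U'' x = - p x * U' x - q x * U x"
    and "continuous_on {y..z} p" "continuous_on {y..z} q"
    and nonneg: "\<And>x. U x \<ge> 0" and "U z = 0" and "y < z"
  shows "U y = 0"
proof -
  have "U' z = 0"
    by (rule DERIV_local_min[OF U', of 1]) (use nonneg \<open>U z = 0\<close> in auto)
  have "bounded (p ` {y..z})" "bounded (q ` {y..z})"
    using assms(4,5) by (auto intro!: compact_imp_bounded compact_continuous_image)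
  then obtain Mp Mq where "\<forall>x\<in>{y..z}. \<bar>p x\<bar> \<le> Mp" "\<forall>x\<in>{y..z}. \<bar>q x\<bar> \<le> Mq"
    unfolding bounded_real by blast
  then have M: "\<bar>p x\<bar> \<le> max Mp Mq \<and> \<bar>q x\<bar> \<le> max Mp Mq" if "x \<in> {y..z}" for x
    using that by (auto simp: le_max_iff_disj)
  define K where "K = 1 + 3 * max Mp Mq"
  define E where "E x = (U x)\<^sup>2 + (U' x)\<^sup>2" for x
  define E' where "E' x = 2 * U x * U' x + 2 * U' x * U'' x" for x
  \<comment> \<open>The weighted energy \<open>E x * exp (K * x)\<close> is nondecreasing on \<open>[y, z]\<close> and vanishes at \<open>z\<close>.\<close>
  define G where "G x = E x * exp (K * x)" for x
  have G': "(G has_real_derivative (E' x + K * E x) * exp (K * x)) (at x)" for x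
    unfolding G_def E_def E'_def
    by (auto intro!: derivative_eq_intros U' U'' simp: algebra_simps)
  have G'_nonneg: "0 \<le> (E' x + K * E x) * exp (K * x)" if "x \<in> {y..z}" for x
    using linear_ode_energy_rate_bound[of "p x" _ "q x" "U x" "U' x"] M[OF that]
    unfolding K_def E_def E'_def ode by simp
  obtain w where "y < w" "w < z" and mvt: "G z - G y = (z - y) * ((E' w + K * E w) * exp (K * w))"
    using MVT2[OF \<open>y < z\<close> G'] by blast
  have "0 \<le> (z - y) * ((E' w + K * E w) * exp (K * w))"
    by (rule mult_nonneg_nonneg) (use G'_nonneg[of w] \<open>y < w\<close> \<open>w < z\<close> in auto)
  moreover have "G z = 0"
    unfolding G_def E_def using \<open>U z = 0\<close> \<open>U' z = 0\<close> by simp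
  ultimately have "E y * exp (K * y) \<le> 0"
    using mvt unfolding G_def by linarith
  then show ?thesis
    unfolding E_def by (simp add: mult_le_0_iff sum_power2_le_zero_iff)
qed

lemma elliptic_profile_slope_tendsto_zero:
  fixes V V' V'' U :: "real \<Rightarrow> real" and lam mu :: real
  assumes "\<And>x. (V has_real_derivative V' x) (at x)"
    and "\<And>x. (V' has_real_derivative V'' x) (at x)"
    and "\<And>x. V'' x = lam * V x - mu * U x"
    and "(V \<longlongrightarrow> 0) at_top" "(U \<longlongrightarrow> 0) at_top"
  shows "(V' \<longlongrightarrow> 0) at_top"
proof (rule tendsto_derivative_zero_at_top[OF assms(1,2,4)])
  have "((\<lambda>x. lam * V x - mu * U x) \<longlongrightarrow> lam * 0 - mu * 0) at_top"
    by (intro tendsto_diff tendsto_mult_left assms(4,5))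
  moreover have "V'' = (\<lambda>x. lam * V x - mu * U x)"
    using assms(3) by (rule ext)
  ultimately show "(V'' \<longlongrightarrow> 0) at_top"
    by simp
qed

lemma quadratic_nonneg_of_discriminant:
  fixes A B m R :: real
  assumes "A > 0" "m\<^sup>2 \<le> 4 * A * B"
  shows "A * R\<^sup>2 + m * R + B \<ge> 0"
proof -
  have "4 * A * (A * R\<^sup>2 + m * R + B) = (2 * A * R + m)\<^sup>2 + (4 * A * B - m\<^sup>2)"
    by algebra
  also have "\<dots> \<ge> 0"
    using assms by simp
  finally show ?thesis
    using assms(1) by (simp add: zero_le_mult_iff)
qed

lemma riccati_quadratic_coercive:
  fixes a c :: real
  assumes "a > 0" "c < 2 * sqrt a"
  obtains \<delta> \<eta> where "\<delta> > 0" "\<eta> > 0"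
    "\<And>p q R. \<bar>p - c\<bar> \<le> \<eta> \<Longrightarrow> \<bar>q - a\<bar> \<le> \<eta> \<Longrightarrow> R \<le> 0 \<Longrightarrow> \<delta> * (1 + R\<^sup>2) \<le> R\<^sup>2 + p * R + q"
proof -
  define m where "m = max c 0"
  \<comment> \<open>Chosen so that \<open>(1 - \<delta>) R\<^sup>2 + m R + (a - \<delta>)\<close> has discriminant \<open>-4\<delta>\<^sup>2\<close>.\<close>
  define \<delta> where "\<delta> = (4 * a - m\<^sup>2) / (4 * (1 + a))"
  have "m\<^sup>2 < (2 * sqrt a)\<^sup>2"
    using assms by (intro power_strict_mono) (auto simp: m_def)
  then have "m\<^sup>2 < 4 * a"
    using assms(1) by (simp add: power_mult_distrib)
  then have \<delta>: "0 < \<delta>" "\<delta> < 1"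
    using assms(1) by (auto simp: \<delta>_def field_simps intro: add_pos_nonneg)
  have "4 * \<delta> * (1 + a) = 4 * a - m\<^sup>2"
    using assms(1) unfolding \<delta>_def by (simp add: field_simps)
  then have "m\<^sup>2 \<le> 4 * (1 - \<delta>) * (a - \<delta>)"
    by (simp add: algebra_simps power2_eq_square)
  have unperturbed: "\<delta> * (1 + R\<^sup>2) \<le> R\<^sup>2 + c * R + a" if "R \<le> 0" for R
  proof -
    have "0 \<le> (1 - \<delta>) * R\<^sup>2 + m * R + (a - \<delta>)"
      using \<open>m\<^sup>2 \<le> 4 * (1 - \<delta>) * (a - \<delta>)\<close> \<delta> by (intro quadratic_nonneg_of_discriminant) auto
    moreover have "m * R \<le> c * R"
      using that by (simp add: m_def mult_right_mono_neg)
    moreover have "R\<^sup>2 + c * R + a - \<delta> * (1 + R\<^sup>2) = (1 - \<delta>) * R\<^sup>2 + m * R + (a - \<delta>) + (c * R - m * R)"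
      by (simp add: algebra_simps)
    ultimately show ?thesis
      by linarith
  qed
  show ?thesis
  proof (rule that[of "\<delta> / 2" "\<delta> / 3"])
    fix p q R :: real
    assume p: "\<bar>p - c\<bar> \<le> \<delta> / 3" and q: "\<bar>q - a\<bar> \<le> \<delta> / 3" and "R \<le> 0"
    have "\<bar>(p - c) * R\<bar> \<le> \<delta> / 3 * \<bar>R\<bar>"
      unfolding abs_mult using p by (intro mult_right_mono) auto
    then have "c * R - \<delta> / 3 * \<bar>R\<bar> \<le> p * R"
      using abs_ge_minus_self[of "(p - c) * R"] by (simp add: algebra_simps)
    moreover have "a - \<delta> / 3 \<le> q"
      using q abs_ge_minus_self[of "q - a"] by linarith
    moreover have "2 * \<bar>R\<bar> \<le> 1 + R\<^sup>2"
      using sum_squares_bound[of 1 "\<bar>R\<bar>"] by simp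
    then have "2 * \<bar>R\<bar> + 2 \<le> 3 + 3 * R\<^sup>2"
      using zero_le_power2[of R] by linarith
    then have "\<delta> / 6 * (2 * \<bar>R\<bar> + 2) \<le> \<delta> / 6 * (3 + 3 * R\<^sup>2)"
      using \<delta> by (intro mult_left_mono) auto
    then have "\<delta> / 3 * (\<bar>R\<bar> + 1) \<le> \<delta> / 2 * (1 + R\<^sup>2)"
      by (simp add: algebra_simps)
    ultimately show "\<delta> / 2 * (1 + R\<^sup>2) \<le> R\<^sup>2 + p * R + q"
      using unperturbed[OF \<open>R \<le> 0\<close>] by (simp add: algebra_simps)
  qed (use \<delta> in auto)
qed

lemma negative_if_crossing_zero_downwards:
  fixes R R' :: "real \<Rightarrow> real"
  assumes R': "\<And>x. z \<le> x \<Longrightarrow> (R has_real_derivative R' x) (at x)"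
    and "R z < 0"
    and crossing: "\<And>x. z \<le> x \<Longrightarrow> R x = 0 \<Longrightarrow> R' x < 0"
    and "z \<le> y"
  shows "R y < 0"
proof (rule ccontr)
  assume "\<not> R y < 0"
  have cont: "continuous_on {z..s} R" for s
    using R' by (intro has_real_derivative_imp_continuous_on) auto
  have zero_before: "\<exists>t. z \<le> t \<and> t \<le> s \<and> R t = 0" if "z \<le> s" "R s \<ge> 0" for s
    using that \<open>R z < 0\<close> by (intro IVT' cont) auto
  \<comment> \<open>Let \<open>t\<close> be the first zero of \<open>R\<close> after \<open>z\<close>; just before \<open>t\<close>, \<open>R\<close> is positive.\<close>
  define T where "T = {t \<in> {z..y}. R t = 0}"
  have "compact T"
    unfolding compact_eq_bounded_closed T_def
    by (intro conjI bounded_subset[OF bounded_closed_interval]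
        continuous_closed_preimage_constant cont closed_atLeastAtMost) auto
  moreover have "T \<noteq> {}"
    using zero_before[OF \<open>z \<le> y\<close>] \<open>\<not> R y < 0\<close> by (auto simp: T_def)
  ultimately obtain t where "t \<in> T" and first: "\<And>s. s \<in> T \<Longrightarrow> t \<le> s"
    by (meson compact_attains_inf)
  then have "z \<le> t" "t \<le> y" "R t = 0"
    by (auto simp: T_def)
  then have "z < t"
    using \<open>R z < 0\<close> by (cases "z = t") auto
  obtain d where "d > 0" and dec: "\<And>h. 0 < h \<Longrightarrow> h < d \<Longrightarrow> R t < R (t - h)"
    using DERIV_neg_dec_left[OF R'[OF \<open>z \<le> t\<close>] crossing[OF \<open>z \<le> t\<close> \<open>R t = 0\<close>]] by blast
  define h where "h = min (d / 2) (t - z)"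
  have "0 < h" "h < d" "z \<le> t - h"
    using \<open>d > 0\<close> \<open>z < t\<close> by (auto simp: h_def)
  then have "R (t - h) > 0"
    using dec \<open>R t = 0\<close> by simp
  then obtain s where "z \<le> s" "s \<le> t - h" "R s = 0"
    using zero_before[OF \<open>z \<le> t - h\<close>] by auto
  then have "s \<in> T"
    using \<open>t \<le> y\<close> \<open>0 < h\<close> by (auto simp: T_def)
  then show False
    using first[of s] \<open>s \<le> t - h\<close> \<open>0 < h\<close> by simp
qed

lemma riccati_inequality_no_forward_solution:
  fixes R R' :: "real \<Rightarrow> real" and \<delta> z :: real
  assumes "\<delta> > 0"
    and R': "\<And>x. z \<le> x \<Longrightarrow> (R has_real_derivative R' x) (at x)"
    and riccati: "\<And>x. z \<le> x \<Longrightarrow> R' x \<le> - \<delta> * (1 + (R x)\<^sup>2)"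
  shows False
proof -
  \<comment> \<open>\<open>arctan \<circ> R\<close> decreases at rate at least \<open>\<delta>\<close>, but its range has length \<open>pi < 4\<close>.\<close>
  define H where "H x = arctan (R x) + \<delta> * x" for x
  define H' where "H' x = R' x / (1 + (R x)\<^sup>2) + \<delta>" for x
  have H': "(H has_real_derivative H' x) (at x)" if "z \<le> x" for x
    unfolding H_def H'_def
    by (auto intro!: derivative_eq_intros R'[OF that] simp: divide_inverse mult.commute)
  have "H' x \<le> 0" if "z \<le> x" for x
    using riccati[OF that] add_pos_nonneg[of 1 "(R x)\<^sup>2"] by (simp add: H'_def divide_simps)
  moreover define z' where "z' = z + 4 / \<delta>"
  have "z < z'"
    using \<open>\<delta> > 0\<close> by (simp add: z'_def)
  then obtain w where "z < w" "w < z'" "H z' - H z = (z' - z) * H' w"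
    using MVT2[of z z' H H'] H' by auto
  ultimately have "H z' \<le> H z"
    by (smt (verit) mult_nonneg_nonpos)
  moreover have "\<delta> * z' = \<delta> * z + 4"
    using \<open>\<delta> > 0\<close> by (simp add: z'_def algebra_simps)
  ultimately show False
    using arctan_ubound[of "R z"] arctan_lbound[of "R z'"] pi_less_4
    by (simp add: H_def)
qed

lemma decaying_has_negative_slope:
  fixes U U' :: "real \<Rightarrow> real"
  assumes U': "\<And>x. (U has_real_derivative U' x) (at x)"
    and "(U \<longlongrightarrow> 0) at_top" and "U z0 > 0"
  obtains z where "z0 \<le> z" "U' z < 0"
proof -
  have "\<exists>z\<ge>z0. U' z < 0"
  proof (rule ccontr)
    assume "\<not> (\<exists>z\<ge>z0. U' z < 0)"
    then have slope: "U' x \<ge> 0" if "z0 \<le> x" for x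
      using that by (simp add: not_less)
    have mono: "U z0 \<le> U z" if "z0 \<le> z" for z
    proof (rule DERIV_nonneg_imp_nondecreasing[OF that])
      show "\<exists>y. (U has_real_derivative y) (at x) \<and> 0 \<le> y" if "z0 \<le> x" for x
        using U' slope[OF that] by blast
    qed
    have "\<forall>\<^sub>F x in at_top. U x < U z0"
      using assms(2,3) by (simp add: order_tendsto_iff)
    then obtain N where "\<And>x. N \<le> x \<Longrightarrow> U x < U z0"
      by (auto simp: eventually_at_top_linorder)
    then have "U (max N z0) < U z0"
      by simp
    moreover have "U z0 \<le> U (max N z0)"
      by (rule mono) simp
    ultimately show False
      by linarith
  qed
  then show ?thesis
    using that by blast
qed

lemma linear_ode_no_positive_decaying_solution:
  fixes U U' U'' p q :: "real \<Rightarrow> real" and a c :: real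
  assumes "a > 0" "c < 2 * sqrt a"
    and U': "\<And>x. (U has_real_derivative U' x) (at x)"
    and U'': "\<And>x. (U' has_real_derivative U'' x) (at x)"
    and ode: "\<And>x. U'' x = - p x * U' x - q x * U x"
    and "(p \<longlongrightarrow> c) at_top" "(q \<longlongrightarrow> a) at_top"
    and pos: "\<And>x. U x > 0" and "(U \<longlongrightarrow> 0) at_top"
  shows False
proof -
  obtain \<delta> \<eta> where "\<delta> > 0" "\<eta> > 0" and coercive:
    "\<And>p q R. \<bar>p - c\<bar> \<le> \<eta> \<Longrightarrow> \<bar>q - a\<bar> \<le> \<eta> \<Longrightarrow> R \<le> 0 \<Longrightarrow> \<delta> * (1 + R\<^sup>2) \<le> R\<^sup>2 + p * R + q"
    using riccati_quadratic_coercive[OF assms(1,2)] by blast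
  have "\<forall>\<^sub>F x in at_top. \<bar>p x - c\<bar> \<le> \<eta> \<and> \<bar>q x - a\<bar> \<le> \<eta>"
    using assms(6,7)[THEN tendstoD, OF \<open>\<eta> > 0\<close>]
    by eventually_elim (simp add: dist_real_def)
  then obtain z1 where near: "\<And>x. z1 \<le> x \<Longrightarrow> \<bar>p x - c\<bar> \<le> \<eta> \<and> \<bar>q x - a\<bar> \<le> \<eta>"
    by (auto simp: eventually_at_top_linorder)
  obtain z2 where "z1 \<le> z2" "U' z2 < 0"
    using decaying_has_negative_slope[OF U' assms(9) pos] .
  define R where "R x = U' x / U x" for x
  have R': "(R has_real_derivative - ((R x)\<^sup>2 + p x * R x + q x)) (at x)" for x
    using pos[of x] unfolding R_def
    by (auto intro!: derivative_eq_intros U' U'' simp: ode field_simps power2_eq_square)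
  have riccati: "\<delta> * (1 + (R x)\<^sup>2) \<le> (R x)\<^sup>2 + p x * R x + q x" if "z1 \<le> x" "R x \<le> 0" for x
    using near[OF that(1)] that(2) by (intro coercive) auto
  have "R x < 0" if "z2 \<le> x" for x
  proof (rule negative_if_crossing_zero_downwards[OF R' _ _ that])
    show "R z2 < 0"
      using \<open>U' z2 < 0\<close> pos[of z2] by (simp add: R_def divide_neg_pos)
    show "- ((R y)\<^sup>2 + p y * R y + q y) < 0" if "z2 \<le> y" "R y = 0" for y
      using riccati[of y] that \<open>z1 \<le> z2\<close> \<open>\<delta> > 0\<close> by simp
  qed
  then have "- ((R x)\<^sup>2 + p x * R x + q x) \<le> - \<delta> * (1 + (R x)\<^sup>2)" if "z2 \<le> x" for x
    using riccati[of x] that \<open>z1 \<le> z2\<close> by fastforce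
  then show False
    by (rule riccati_inequality_no_forward_solution[OF \<open>\<delta> > 0\<close> R'])
qed

lemma nonneg_linear_ode_positive:
  fixes U U' U'' p q :: "real \<Rightarrow> real" and L :: real
  assumes U': "\<And>x. (U has_real_derivative U' x) (at x)"
    and U'': "\<And>x. (U' has_real_derivative U'' x) (at x)"
    and ode: "\<And>x. U'' x = - p x * U' x - q x * U x"
    and "continuous_on UNIV p" "continuous_on UNIV q"
    and nonneg: "\<And>x. U x \<ge> 0" and "(U \<longlongrightarrow> L) at_bot" and "L > 0"
  shows "U x > 0"
proof (rule ccontr)
  assume "\<not> U x > 0"
  then have "U x = 0"
    using nonneg[of x] by simp
  have vanish: "U y = 0" if "y < x" for y
  proof (rule nonneg_linear_ode_zero_propagates_left[OF U' U'' ode _ _ nonneg \<open>U x = 0\<close> that])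
    show "continuous_on {y..x} p" "continuous_on {y..x} q"
      using assms(4,5) by (auto intro: continuous_on_subset)
  qed
  have "\<forall>\<^sub>F y in at_bot. U y > 0"
    using assms(7,8) by (simp add: order_tendsto_iff)
  then obtain N where "\<And>y. y \<le> N \<Longrightarrow> U y > 0"
    by (auto simp: eventually_at_bot_linorder)
  then have "U (min N (x - 1)) > 0"
    by simp
  moreover have "U (min N (x - 1)) = 0"
    by (rule vanish) simp
  ultimately show False
    by simp
qed

lemma deriv_moving_frame_at_zero:
  fixes U :: "real \<Rightarrow> real"
  assumes "(U has_real_derivative D) (at x)"
  shows "deriv (\<lambda>s. U (x - c * s)) 0 = - c * D"
proof (rule DERIV_imp_deriv)
  have "((\<lambda>s. x - c * s) has_real_derivative - c) (at 0)"
    by (auto intro!: derivative_eq_intros)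
  from DERIV_chain2[OF _ this] show "((\<lambda>s. U (x - c * s)) has_real_derivative - c * D) (at 0)"
    using assms by (simp add: mult.commute)
qed

lemma traveling_wave_profile_equations:
  fixes a b chi1 chi2 lam1 lam2 mu1 mu2 c :: real and U V1 V2 :: "real \<Rightarrow> real"
  assumes "traveling_wave a b chi1 chi2 lam1 lam2 mu1 mu2 c U V1 V2"
  obtains U' U'' V1' V1'' V2' V2'' where
    "\<And>x. (U has_real_derivative U' x) (at x)" "\<And>x. (U' has_real_derivative U'' x) (at x)"
    "\<And>x. (V1 has_real_derivative V1' x) (at x)" "\<And>x. (V1' has_real_derivative V1'' x) (at x)"
    "\<And>x. (V2 has_real_derivative V2' x) (at x)" "\<And>x. (V2' has_real_derivative V2'' x) (at x)"
    "\<And>x. V1'' x = lam1 * V1 x - mu1 * U x" "\<And>x. V2'' x = lam2 * V2 x - mu2 * U x"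
    "\<And>x. U'' x = - (c + (chi2 * V2' x - chi1 * V1' x)) * U' x
        - (chi2 * V2'' x - chi1 * V1'' x + a - b * U x) * U x"
proof -
  note tw = assms[unfolded traveling_wave_def Let_def]
  obtain U' U'' V1' V1'' V2' V2'' where
    U': "\<And>x. (U has_real_derivative U' x) (at x)" and U'': "\<And>x. (U' has_real_derivative U'' x) (at x)"
    and V1': "\<And>x. (V1 has_real_derivative V1' x) (at x)" and V1'': "\<And>x. (V1' has_real_derivative V1'' x) (at x)"
    and V2': "\<And>x. (V2 has_real_derivative V2' x) (at x)" and V2'': "\<And>x. (V2' has_real_derivative V2'' x) (at x)"
    using tw[THEN conjunct2, THEN conjunct1] tw[THEN conjunct2, THEN conjunct2, THEN conjunct1]
      tw[THEN conjunct2, THEN conjunct2, THEN conjunct2, THEN conjunct1]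
    unfolding C2_real_def by metis
  have derivs: "deriv U = U'" "deriv U' = U''" "deriv V1 = V1'" "deriv V1' = V1''"
    "deriv V2 = V2'" "deriv V2' = V2''"
    using DERIV_imp_deriv U' U'' V1' V1'' V2' V2'' by blast+
  have parabolic: "deriv (\<lambda>s. U (x - c * s)) 0 = deriv (deriv U) x
      + deriv (\<lambda>y. U y * deriv (\<lambda>y'. chi2 * V2 y' - chi1 * V1 y') y) x + U x * (a - b * U x)" for x
    using tw by (auto dest!: spec[of _ 0])
  have elliptic:
    "\<forall>t x. 0 = deriv (deriv (\<lambda>x. V1 (x - c * t))) x - lam1 * V1 (x - c * t) + mu1 * U (x - c * t)"
    "\<forall>t x. 0 = deriv (deriv (\<lambda>x. V2 (x - c * t))) x - lam2 * V2 (x - c * t) + mu2 * U (x - c * t)"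
    using tw by blast+
  have V1''_eq: "V1'' x = lam1 * V1 x - mu1 * U x" for x
    using elliptic(1)[THEN spec[of _ 0], THEN spec[of _ x]] by (simp add: derivs)
  have V2''_eq: "V2'' x = lam2 * V2 x - mu2 * U x" for x
    using elliptic(2)[THEN spec[of _ 0], THEN spec[of _ x]] by (simp add: derivs)
  define W' where "W' x = chi2 * V2' x - chi1 * V1' x" for x
  have "deriv (\<lambda>y'. chi2 * V2 y' - chi1 * V1 y') = W'"
  proof
    show "deriv (\<lambda>y'. chi2 * V2 y' - chi1 * V1 y') x = W' x" for x
      unfolding W'_def by (rule DERIV_imp_deriv) (auto intro!: derivative_eq_intros V1' V2')
  qed
  moreover have "deriv (\<lambda>y. U y * W' y) x = U' x * W' x + U x * (chi2 * V2'' x - chi1 * V1'' x)" for x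
    unfolding W'_def by (rule DERIV_imp_deriv) (auto intro!: derivative_eq_intros U' V1'' V2'')
  ultimately have "U'' x = - (c + W' x) * U' x - (chi2 * V2'' x - chi1 * V1'' x + a - b * U x) * U x" for x
    using parabolic[of x] deriv_moving_frame_at_zero[OF U', of x c] by (simp add: derivs algebra_simps)
  then show ?thesis
    using that[OF U' U'' V1' V1'' V2' V2'' V1''_eq V2''_eq] by (simp add: W'_def)
qed

lemma traveling_wave_profile_ode:
  fixes a b chi1 chi2 lam1 lam2 mu1 mu2 c :: real and U V1 V2 :: "real \<Rightarrow> real"
  assumes tw: "traveling_wave a b chi1 chi2 lam1 lam2 mu1 mu2 c U V1 V2"
  obtains U' U'' p q where
    "\<And>x. (U has_real_derivative U' x) (at x)" "\<And>x. (U' has_real_derivative U'' x) (at x)"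
    "\<And>x. U'' x = - p x * U' x - q x * U x"
    "continuous_on UNIV p" "continuous_on UNIV q"
    "(p \<longlongrightarrow> c) at_top" "(q \<longlongrightarrow> a) at_top"
proof -
  obtain U' U'' V1' V1'' V2' V2'' where U': "\<And>x. (U has_real_derivative U' x) (at x)"
    and U'': "\<And>x. (U' has_real_derivative U'' x) (at x)"
    and V1': "\<And>x. (V1 has_real_derivative V1' x) (at x)" and V1'': "\<And>x. (V1' has_real_derivative V1'' x) (at x)"
    and V2': "\<And>x. (V2 has_real_derivative V2' x) (at x)" and V2'': "\<And>x. (V2' has_real_derivative V2'' x) (at x)"
    and V1''_eq: "\<And>x. V1'' x = lam1 * V1 x - mu1 * U x" and V2''_eq: "\<And>x. V2'' x = lam2 * V2 x - mu2 * U x"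
    and ode: "\<And>x. U'' x = - (c + (chi2 * V2' x - chi1 * V1' x)) * U' x
        - (chi2 * V2'' x - chi1 * V1'' x + a - b * U x) * U x"
    using traveling_wave_profile_equations[OF tw] by blast
  define p where "p x = c + (chi2 * V2' x - chi1 * V1' x)" for x
  define q where "q x = chi2 * V2'' x - chi1 * V1'' x + a - b * U x" for x
  have lims: "(U \<longlongrightarrow> 0) at_top" "(V1 \<longlongrightarrow> 0) at_top" "(V2 \<longlongrightarrow> 0) at_top"
    using tw unfolding traveling_wave_def Let_def by blast+
  then have "(V1' \<longlongrightarrow> 0) at_top" "(V2' \<longlongrightarrow> 0) at_top"
    using elliptic_profile_slope_tendsto_zero[OF V1' V1'' V1''_eq]
      elliptic_profile_slope_tendsto_zero[OF V2' V2'' V2''_eq] by blast+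
  then have "(p \<longlongrightarrow> c + (chi2 * 0 - chi1 * 0)) at_top"
    unfolding p_def by (intro tendsto_add tendsto_diff tendsto_mult_left tendsto_const)
  moreover have "(q \<longlongrightarrow> chi2 * (lam2 * 0 - mu2 * 0) - chi1 * (lam1 * 0 - mu1 * 0) + a - b * 0) at_top"
    unfolding q_def V1''_eq V2''_eq by (intro tendsto_add tendsto_diff tendsto_mult_left tendsto_const lims)
  moreover have "continuous_on UNIV U" "continuous_on UNIV V1" "continuous_on UNIV V2"
    "continuous_on UNIV V1'" "continuous_on UNIV V2'"
    using U' V1' V2' V1'' V2'' by (blast intro: has_real_derivative_imp_continuous_on)+
  then have "continuous_on UNIV p" "continuous_on UNIV q"
    unfolding p_def q_def V1''_eq V2''_eq by (auto intro!: continuous_intros)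
  moreover have "U'' x = - p x * U' x - q x * U x" for x
    unfolding p_def q_def by (rule ode)
  ultimately show ?thesis
    using that[OF U' U''] by simp
qed

theorem theoremC:
  fixes a b chi1 chi2 lam1 lam2 mu1 mu2 c :: real
  assumes "a > 0" and "b > 0" and "chi1 \<ge> 0" and "chi2 \<ge> 0"
    and "lam1 > 0" and "lam2 > 0" and "mu1 > 0" and "mu2 > 0"
    and "c < 2 * sqrt a"
  shows "\<not> (\<exists>U V1 V2. traveling_wave a b chi1 chi2 lam1 lam2 mu1 mu2 c U V1 V2)"
proof
  assume "\<exists>U V1 V2. traveling_wave a b chi1 chi2 lam1 lam2 mu1 mu2 c U V1 V2"
  then obtain U V1 V2 where tw: "traveling_wave a b chi1 chi2 lam1 lam2 mu1 mu2 c U V1 V2"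
    by blast
  then obtain U' U'' p q where U': "\<And>x. (U has_real_derivative U' x) (at x)"
    and U'': "\<And>x. (U' has_real_derivative U'' x) (at x)"
    and ode: "\<And>x. U'' x = - p x * U' x - q x * U x"
    and "continuous_on UNIV p" "continuous_on UNIV q" "(p \<longlongrightarrow> c) at_top" "(q \<longlongrightarrow> a) at_top"
    using traveling_wave_profile_ode[OF tw] by blast
  have "\<And>x. U x \<ge> 0" "(U \<longlongrightarrow> a / b) at_bot" "(U \<longlongrightarrow> 0) at_top"
    using tw unfolding traveling_wave_def Let_def by blast+
  moreover have "a / b > 0"
    using \<open>a > 0\<close> \<open>b > 0\<close> by simp
  ultimately have "U x > 0" for x
    using nonneg_linear_ode_positive[OF U' U'' ode \<open>continuous_on UNIV p\<close> \<open>continuous_on UNIV q\<close>]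
    by blast
  then show False
    using linear_ode_no_positive_decaying_solution[OF \<open>a > 0\<close> \<open>c < 2 * sqrt a\<close> U' U'' ode
        \<open>(p \<longlongrightarrow> c) at_top\<close> \<open>(q \<longlongrightarrow> a) at_top\<close>] \<open>(U \<longlongrightarrow> 0) at_top\<close>
    by blast
qed

end
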